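(* Let $\rho\in(0,1)$ and $k\ge1$ an integer. Let $\beta_\rho=\frac{\sqrt{1+\rho}-\sqrt{1-\rho}}{\sqrt{1+\rho}+\sqrt{1-\rho}}$, $\rho_1=\frac{2\beta_\rho^k}{1+\beta_\rho^{2k}}$ and $$C_1=\frac{\rho_1}{2\rho^k}\Big(\big(1-\sqrt{1+\rho^2}\big)^k+\big(1+\sqrt{1+\rho^2}\big)^k\Big).$$ Then $\tilde\rho(C_1)\le\rho_1$.
   Context: $\mathbb{R}_k[X]$ denotes real polynomials of degree at most $k$, and $\|p\|_1$ is the sum of absolute values of the coefficients of $p$. For $C\ge1$, $\tilde\rho(C)=\min\{\max_{x\in[0,\rho]}|p(x)| : p\in\mathbb{R}_k[X],\ p(1)=1,\ \|p\|_1\le C\}$. *)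

theory Defs
  imports "HOL-Analysis.Analysis" "HOL-Computational_Algebra.Polynomial"
begin

definition l1_norm :: "real poly \<Rightarrow> real" where
  "l1_norm p = (\<Sum>i\<le>degree p. \<bar>coeff p i\<bar>)"

text \<open>The minimal value of the sup-norm on [0,rho] over polynomials of degree at most k
  with p(1) = 1 and l1-norm at most C (the paper writes min; the min is attained,
  we use Inf).\<close>
definition tilde_rho :: "nat \<Rightarrow> real \<Rightarrow> real \<Rightarrow> real" where
  "tilde_rho k rho C =
     Inf {Sup ((\<lambda>x. \<bar>poly p x\<bar>) ` {0..rho}) | p.
            degree p \<le> k \<and> poly p 1 = 1 \<and> l1_norm p \<le> C}"

end

theory Submission
  imports Defs
begin

text \<open>
  The witness is the rescaled Chebyshev polynomial p = rho1 T_k(X / rho). Since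
  T_k(cos t) = cos (k t), p is bounded by rho1 on [0, rho]. The choice of beta makes
  1/beta + beta = 2/rho, so T_k(1/rho) = (beta^-k + beta^k)/2 = 1/rho1 and p(1) = 1.
  Finally, by the triangle inequality the recurrence T_(n+2) = 2 X T_(n+1) - T_n bounds
  the l1-norm of T_n(X / rho) by the solution of S_(n+2) = (2/rho) S_(n+1) + S_n, whose
  characteristic roots (1 +- sqrt (1 + rho^2))/rho give rho1 S_k = C1.
\<close>

lemma lucas_recurrence_closed_form:
  fixes f :: "nat \<Rightarrow> 'a::comm_ring_1"
  assumes "f 0 = 1" and "2 * f 1 = u + v"
    and "\<And>n. f (Suc (Suc n)) = (u + v) * f (Suc n) - u * v * f n"
  shows "2 * f n = u ^ n + v ^ n"
proof (induction n rule: induct_nat_012)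
  case (ge2 n)
  then show ?case by (simp add: assms(3) algebra_simps)
qed (use assms in simp_all)

text \<open>\<^term>\<open>scaled_chebyshev c n\<close> is T_n(c X), with T_n the Chebyshev polynomial of the first kind.\<close>

fun scaled_chebyshev :: "real \<Rightarrow> nat \<Rightarrow> real poly" where
  "scaled_chebyshev c 0 = 1"
| "scaled_chebyshev c (Suc 0) = [:0, c:]"
| "scaled_chebyshev c (Suc (Suc n)) =
     pCons 0 (smult (2 * c) (scaled_chebyshev c (Suc n))) - scaled_chebyshev c n"

fun scaled_chebyshev_l1_bound :: "real \<Rightarrow> nat \<Rightarrow> real" where
  "scaled_chebyshev_l1_bound c 0 = 1"
| "scaled_chebyshev_l1_bound c (Suc 0) = c"
| "scaled_chebyshev_l1_bound c (Suc (Suc n)) =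
     2 * c * scaled_chebyshev_l1_bound c (Suc n) + scaled_chebyshev_l1_bound c n"

lemma degree_scaled_chebyshev: "degree (scaled_chebyshev c n) \<le> n"
proof (induction n rule: induct_nat_012)
  case (ge2 n)
  have "degree (pCons 0 (smult (2 * c) (scaled_chebyshev c (Suc n)))) \<le> Suc (Suc n)"
    using ge2(2) degree_smult_le[of "2 * c" "scaled_chebyshev c (Suc n)"] by simp
  with ge2(1) show ?case
    by (simp only: scaled_chebyshev.simps) (intro degree_diff_le; simp)
qed simp_all

lemma poly_scaled_chebyshev_cos:
  assumes "c * x = cos t"
  shows "poly (scaled_chebyshev c n) x = cos (real n * t)"
proof (induction n rule: induct_nat_012)
  case (ge2 n)
  have "cos (real (Suc (Suc n)) * t) = 2 * cos t * cos (real (Suc n) * t) - cos (real n * t)"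
    using cos_add[of "real (Suc n) * t" t] cos_diff[of "real (Suc n) * t" t]
    by (simp add: algebra_simps)
  also have "\<dots> = 2 * (c * x) * poly (scaled_chebyshev c (Suc n)) x - poly (scaled_chebyshev c n) x"
    using ge2 assms by simp
  finally show ?case by (simp add: algebra_simps)
qed (use assms in \<open>simp_all add: mult.commute\<close>)

lemma abs_poly_scaled_chebyshev_le_1:
  assumes "0 < rho" and "\<bar>x\<bar> \<le> rho"
  shows "\<bar>poly (scaled_chebyshev (1 / rho) n) x\<bar> \<le> 1"
proof -
  have "\<bar>x / rho\<bar> \<le> 1"
    using assms by (simp add: abs_divide)
  then have "1 / rho * x = cos (arccos (x / rho))"
    by (simp add: cos_arccos_abs del: abs_divide)
  then show ?thesis
    by (simp only: poly_scaled_chebyshev_cos abs_cos_le_one)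
qed

lemma poly_scaled_chebyshev_closed_form:
  assumes "u + v = 2 * c * x" and "u * v = 1"
  shows "2 * poly (scaled_chebyshev c n) x = u ^ n + v ^ n"
  by (rule lucas_recurrence_closed_form) (use assms in \<open>simp_all add: algebra_simps\<close>)

lemma poly_scaled_chebyshev_at_1:
  assumes "0 < beta" and "1 / beta + beta = 2 * c"
  shows "2 * beta ^ n / (1 + beta ^ (2 * n)) * poly (scaled_chebyshev c n) 1 = 1"
proof -
  have "2 * poly (scaled_chebyshev c n) 1 = (1 / beta) ^ n + beta ^ n"
    using assms by (intro poly_scaled_chebyshev_closed_form) simp_all
  moreover have "0 < 1 + beta ^ (2 * n)"
    using assms(1) by (simp add: add_pos_nonneg)
  ultimately show ?thesis
    using assms(1) by (simp add: field_simps power_mult power2_eq_square power_mult_distrib)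
qed

lemma l1_norm_eq_sum_atMost:
  assumes "degree p \<le> N"
  shows "l1_norm p = (\<Sum>i\<le>N. \<bar>coeff p i\<bar>)"
  unfolding l1_norm_def
  by (rule sum.mono_neutral_left) (use assms in \<open>auto simp: coeff_eq_0\<close>)

lemma l1_norm_diff_le: "l1_norm (p - q) \<le> l1_norm p + l1_norm q"
proof -
  define N where "N = max (degree p) (degree q)"
  have "degree (p - q) \<le> N"
    unfolding N_def by (rule degree_diff_le) auto
  then have "l1_norm (p - q) = (\<Sum>i\<le>N. \<bar>coeff p i - coeff q i\<bar>)"
    by (simp add: l1_norm_eq_sum_atMost)
  also have "\<dots> \<le> (\<Sum>i\<le>N. \<bar>coeff p i\<bar> + \<bar>coeff q i\<bar>)"
    by (intro sum_mono abs_triangle_ineq4)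
  also have "\<dots> = l1_norm p + l1_norm q"
    using l1_norm_eq_sum_atMost[of p N] l1_norm_eq_sum_atMost[of q N]
    by (simp add: sum.distrib N_def)
  finally show ?thesis .
qed

lemma l1_norm_smult: "l1_norm (smult a p) = \<bar>a\<bar> * l1_norm p"
  using l1_norm_eq_sum_atMost[OF degree_smult_le, of a p]
  by (simp add: l1_norm_def sum_distrib_left abs_mult)

lemma l1_norm_pCons_0: "l1_norm (pCons 0 p) = l1_norm p"
proof -
  have "l1_norm (pCons 0 p) = (\<Sum>i\<le>Suc (degree p). \<bar>coeff (pCons 0 p) i\<bar>)"
    by (intro l1_norm_eq_sum_atMost degree_pCons_le)
  then show ?thesis
    by (simp add: l1_norm_def sum.atMost_Suc_shift del: sum.atMost_Suc)
qed

lemma l1_norm_scaled_chebyshev_le: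
  assumes "0 \<le> c"
  shows "l1_norm (scaled_chebyshev c n) \<le> scaled_chebyshev_l1_bound c n"
proof (induction n rule: induct_nat_012)
  case (ge2 n)
  have "l1_norm (scaled_chebyshev c (Suc (Suc n)))
      \<le> 2 * c * l1_norm (scaled_chebyshev c (Suc n)) + l1_norm (scaled_chebyshev c n)"
    using l1_norm_diff_le[of "pCons 0 (smult (2 * c) (scaled_chebyshev c (Suc n)))"]
    by (simp add: l1_norm_pCons_0 l1_norm_smult assms)
  also have "\<dots> \<le> scaled_chebyshev_l1_bound c (Suc (Suc n))"
    using ge2 assms by (simp add: add_mono mult_left_mono)
  finally show ?case .
qed (use assms in \<open>simp_all add: l1_norm_def\<close>)

lemma scaled_chebyshev_l1_bound_closed_form:
  assumes "u + v = 2 * c" and "u * v = -1"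
  shows "2 * scaled_chebyshev_l1_bound c n = u ^ n + v ^ n"
  by (rule lucas_recurrence_closed_form) (use assms in \<open>simp_all add: algebra_simps\<close>)

lemma scaled_chebyshev_l1_bound_inverse:
  assumes "0 < rho"
  shows "2 * rho ^ n * scaled_chebyshev_l1_bound (1 / rho) n
    = (1 - sqrt (1 + rho\<^sup>2)) ^ n + (1 + sqrt (1 + rho\<^sup>2)) ^ n"
proof -
  define w where "w = sqrt (1 + rho\<^sup>2)"
  have "(1 + w) * (1 - w) = - rho\<^sup>2"
    by (simp add: w_def algebra_simps flip: power2_eq_square)
  then have "2 * scaled_chebyshev_l1_bound (1 / rho) n = ((1 - w) / rho) ^ n + ((1 + w) / rho) ^ n"
    using assms by (intro scaled_chebyshev_l1_bound_closed_form)
      (simp_all add: field_simps power2_eq_square)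
  then have "2 * rho ^ n * scaled_chebyshev_l1_bound (1 / rho) n
      = rho ^ n * ((1 - w) ^ n / rho ^ n + (1 + w) ^ n / rho ^ n)"
    by (simp add: power_divide)
  also have "\<dots> = (1 - w) ^ n + (1 + w) ^ n"
    using assms by (simp add: distrib_left)
  finally show ?thesis
    by (simp only: w_def)
qed

lemma tilde_rho_le:
  assumes "0 \<le> rho" "degree p \<le> k" "poly p 1 = 1" "l1_norm p \<le> C"
    and "\<And>x. x \<in> {0..rho} \<Longrightarrow> \<bar>poly p x\<bar> \<le> M"
  shows "tilde_rho k rho C \<le> M"
proof -
  let ?sup = "\<lambda>q. Sup ((\<lambda>x. \<bar>poly q x\<bar>) ` {0..rho})"
  have sup_nonneg: "0 \<le> ?sup q" for q
  proof -
    have "bdd_above ((\<lambda>x. \<bar>poly q x\<bar>) ` {0..rho})"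
      by (intro bounded_imp_bdd_above compact_imp_bounded compact_continuous_image
          continuous_intros) auto
    then show ?thesis
      using assms(1) by (intro cSup_upper2[of "\<bar>poly q 0\<bar>"]) auto
  qed
  have "?sup p \<le> M"
    using assms(1,5) by (intro cSUP_least) auto
  moreover have "bdd_below {?sup q | q. degree q \<le> k \<and> poly q 1 = 1 \<and> l1_norm q \<le> C}"
    using sup_nonneg by (intro bdd_belowI[of _ 0]) auto
  ultimately show ?thesis
    unfolding tilde_rho_def using assms(2-4) by (intro cInf_lower2[of "?sup p"]) auto
qed

lemma
  fixes rho :: real
  assumes "0 < rho" and "rho < 1"
  defines "beta \<equiv> (sqrt (1 + rho) - sqrt (1 - rho)) / (sqrt (1 + rho) + sqrt (1 - rho))"
  shows beta_pos: "0 < beta"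
    and inverse_beta_add_beta: "1 / beta + beta = 2 * (1 / rho)"
proof -
  define a b where "a = sqrt (1 + rho)" and "b = sqrt (1 - rho)"
  have "0 < b" "b < a"
    using assms(1,2) by (simp_all add: a_def b_def)
  moreover have "a\<^sup>2 + b\<^sup>2 = 2" and "a\<^sup>2 - b\<^sup>2 = 2 * rho"
    using assms(1,2) by (simp_all add: a_def b_def)
  ultimately have "1 / beta + beta = ((a + b)\<^sup>2 + (a - b)\<^sup>2) / (a\<^sup>2 - b\<^sup>2)"
    and "((a + b)\<^sup>2 + (a - b)\<^sup>2) / (a\<^sup>2 - b\<^sup>2) = 2 * (1 / rho)"
    by (simp_all add: beta_def flip: a_def b_def) (simp_all add: field_simps power2_eq_square)
  then show "1 / beta + beta = 2 * (1 / rho)" by simp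
  show "0 < beta"
    using \<open>0 < b\<close> \<open>b < a\<close> by (simp add: beta_def flip: a_def b_def)
qed

theorem proposition4:
  fixes rho :: real and k :: nat
  assumes "0 < rho" "rho < 1" "k \<ge> 1"
  defines "beta \<equiv> (sqrt (1 + rho) - sqrt (1 - rho)) / (sqrt (1 + rho) + sqrt (1 - rho))"
  defines "rho1 \<equiv> 2 * beta ^ k / (1 + beta ^ (2 * k))"
  defines "C1 \<equiv> rho1 / (2 * rho ^ k) *
              ((1 - sqrt (1 + rho\<^sup>2)) ^ k + (1 + sqrt (1 + rho\<^sup>2)) ^ k)"
  shows "tilde_rho k rho C1 \<le> rho1"
proof -
  have "0 < beta" and beta_sum: "1 / beta + beta = 2 * (1 / rho)"
    using beta_pos[OF assms(1,2)] inverse_beta_add_beta[OF assms(1,2)] by (simp_all add: beta_def)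
  then have "0 < rho1"
    by (simp add: rho1_def add_pos_nonneg)
  define p where "p = smult rho1 (scaled_chebyshev (1 / rho) k)"
  show ?thesis
  proof (rule tilde_rho_le)
    show "degree p \<le> k"
      unfolding p_def by (rule order.trans[OF degree_smult_le degree_scaled_chebyshev])
    have "rho1 * poly (scaled_chebyshev (1 / rho) k) 1 = 1"
      unfolding rho1_def by (rule poly_scaled_chebyshev_at_1[OF \<open>0 < beta\<close> beta_sum])
    then show "poly p 1 = 1"
      by (simp add: p_def)
    have "l1_norm p \<le> rho1 * scaled_chebyshev_l1_bound (1 / rho) k"
      using \<open>0 < rho1\<close> assms(1) l1_norm_scaled_chebyshev_le[of "1 / rho" k]
      by (simp add: p_def l1_norm_smult)
    also have "\<dots> = rho1 / (2 * rho ^ k) * (2 * rho ^ k * scaled_chebyshev_l1_bound (1 / rho) k)"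
      using assms(1) by simp
    also have "\<dots> = C1"
      by (simp only: C1_def scaled_chebyshev_l1_bound_inverse[OF assms(1)])
    finally show "l1_norm p \<le> C1" .
    show "\<bar>poly p x\<bar> \<le> rho1" if "x \<in> {0..rho}" for x
      using abs_poly_scaled_chebyshev_le_1[OF assms(1), of x k] that \<open>0 < rho1\<close>
      by (simp add: p_def abs_mult mult_left_le)
  qed (use assms(1) in simp)
qed

end
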